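(* Let $K,T\subset\mathbb{R}^n$ be convex polytopes (containing the origin in their interiors), let $F_1,\dots,F_m$ be faces of $K$ and $G_1,\dots,G_m$ faces of $T$. Let $q=(q_1,\dots,q_m)$, $q'=(q_1',\dots,q_m')$ be closed polygonal curves with vertices on $\partial K$ and $p=(p_1,\dots,p_m)$, $p'=(p_1',\dots,p_m')$ closed polygonal curves with vertices on $\partial T$ such that for all $j$ (indices mod $m$) $$q_{j+1}-q_j\in N_T(p_j),\quad p_{j+1}-p_j\in -N_K(q_{j+1}),\quad q'_{j+1}-q'_j\in N_T(p'_j),\quad p'_{j+1}-p'_j\in -N_K(q'_{j+1}).$$ Assume that for each $j$, $q_j,q_j'\in\operatorname{relint}(F_j)$ if $F_j$ is not a vertex and $q_j,q_j'\in F_j$ if $F_j$ is a vertex, and likewise $p_j,p_j'\in\operatorname{relint}(G_j)$ if $G_j$ is not a vertex and $p_j,p'_j\in G_j$ if $G_j$ is a vertex. Then $\ell_T(q)=\ell_T(q')$.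
   Context: For a convex body $T$ (compact convex set with the origin in its interior), $T^\circ$ is its polar body and $\mu_{T^\circ}(x)=\min\{t\ge 0: x\in tT^\circ\}$ (equal to $h_T(x)=\max_{y\in T}\langle x,y\rangle$). For a convex set $C$ and $z\in\partial C$, $N_C(z)=\{v:\langle v,y-z\rangle\le 0\ \forall y\in C\}$. For a closed polygonal curve $q=(q_1,\dots,q_m)$ (indices mod $m$), $\ell_T(q)=\sum_{j=1}^m\mu_{T^\circ}(q_{j+1}-q_j)$. $\operatorname{relint}$ denotes relative interior. *)

theory Defs
  imports "HOL-Analysis.Analysis"
begin

definition normal_cone :: "'a::euclidean_space set \<Rightarrow> 'a \<Rightarrow> 'a set" where
  "normal_cone C z = {v. \<forall>y\<in>C. v \<bullet> (y - z) \<le> 0}"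

text \<open>Support function h_T(x) = max over y in T of x . y, which equals the gauge of the polar body.\<close>
definition supp_fun :: "'a::euclidean_space set \<Rightarrow> 'a \<Rightarrow> real" where
  "supp_fun T x = Sup ((\<lambda>y. x \<bullet> y) ` T)"

definition poly_length :: "'a::euclidean_space set \<Rightarrow> nat \<Rightarrow> (nat \<Rightarrow> 'a) \<Rightarrow> real" where
  "poly_length T m q = (\<Sum>j<m. supp_fun T (q (Suc j mod m) - q j))"

definition is_vertex_face :: "'a set \<Rightarrow> bool" where
  "is_vertex_face F \<longleftrightarrow> (\<exists>v. F = {v})"

definition face_pos :: "'a::euclidean_space set \<Rightarrow> 'a \<Rightarrow> bool" where
  "face_pos F x \<longleftrightarrow> (if is_vertex_face F then x \<in> F else x \<in> rel_interior F)"

end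

theory Submission
  imports Defs
begin

text \<open>A normal vector v of T at p_j is maximised on T at p_j, so the T-length of the edge
  v = q_(j+1) - q_j is v . p_j; since the face G_j containing p_j in its relative interior is
  flat in direction v, p_j may be replaced by p'_j. Summation by parts turns
  sum_j (q_(j+1) - q_j) . p'_j into sum_j q_(j+1) . (p'_j - p'_(j+1)), and p'_j - p'_(j+1) is a
  normal vector of K at q'_(j+1), flat on F_(j+1), so q may be replaced by q'. Reversing both
  steps yields the T-length of q'.\<close>

lemma normal_cone_inner_eq_rel_interior:
  fixes F S :: "'a::euclidean_space set"
  assumes v: "v \<in> normal_cone S x" and "convex F" "F \<subseteq> S"
    and x: "x \<in> rel_interior F" and y: "y \<in> F"
  shows "v \<bullet> x = v \<bullet> y"
proof -
  have le: "v \<bullet> (z - x) \<le> 0" if "z \<in> F" for z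
    using v that \<open>F \<subseteq> S\<close> by (auto simp: normal_cone_def)
  have "y \<in> affine hull F"
    using y by (rule hull_inc)
  then obtain e where "e > 1" and ze: "(1 - e) *\<^sub>R y + e *\<^sub>R x \<in> F"
    using convex_rel_interior_if2[OF \<open>convex F\<close> x] by blast
  have "((1 - e) *\<^sub>R y + e *\<^sub>R x) - x = (1 - e) *\<^sub>R (y - x)"
    by (simp add: algebra_simps)
  with le[OF ze] have "(1 - e) * (v \<bullet> (y - x)) \<le> 0"
    by simp
  with \<open>e > 1\<close> have "v \<bullet> (y - x) \<ge> 0"
    by (simp add: mult_le_0_iff)
  with le[OF y] show ?thesis
    by (simp add: inner_diff_right)
qed

lemma normal_cone_inner_eq_face_pos:
  fixes F S :: "'a::euclidean_space set"
  assumes "v \<in> normal_cone S x" "F face_of S" "face_pos F x" "face_pos F y"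
  shows "v \<bullet> x = v \<bullet> y"
proof (cases "is_vertex_face F")
  case True
  then show ?thesis
    using assms(3,4) by (auto simp: face_pos_def is_vertex_face_def)
next
  case False
  then have "x \<in> rel_interior F" "y \<in> rel_interior F"
    using assms(3,4) by (auto simp: face_pos_def)
  moreover have "convex F" "F \<subseteq> S"
    using assms(2) by (auto dest: face_of_imp_convex face_of_imp_subset)
  ultimately show ?thesis
    using normal_cone_inner_eq_rel_interior[OF assms(1)] rel_interior_subset by blast
qed

lemma supp_fun_normal_cone:
  fixes T :: "'a::euclidean_space set"
  assumes "v \<in> normal_cone T p" "p \<in> T"
  shows "supp_fun T v = v \<bullet> p"
  unfolding supp_fun_def
proof (rule cSup_eq_maximum)
  show "v \<bullet> p \<in> (\<lambda>y. v \<bullet> y) ` T"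
    using assms(2) by blast
  show "z \<le> v \<bullet> p" if "z \<in> (\<lambda>y. v \<bullet> y) ` T" for z
    using assms(1) that by (auto simp: normal_cone_def inner_diff_right)
qed

lemma poly_length_eq_sum_inner:
  fixes T :: "'a::euclidean_space set"
  assumes "\<forall>j<m. q (Suc j mod m) - q j \<in> normal_cone T (p j)" "\<forall>j<m. p j \<in> T"
  shows "poly_length T m q = (\<Sum>j<m. (q (Suc j mod m) - q j) \<bullet> p j)"
  unfolding poly_length_def using assms by (intro sum.cong) (auto intro: supp_fun_normal_cone)

lemma sum_lessThan_Suc_mod:
  fixes g :: "nat \<Rightarrow> 'b::comm_monoid_add"
  shows "(\<Sum>j<m. g (Suc j mod m)) = (\<Sum>j<m. g j)"
proof (cases m)
  case (Suc k)
  have "(\<Sum>j<Suc k. g (Suc j mod Suc k)) = (\<Sum>j<k. g (Suc j)) + g 0"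
    by simp
  also have "\<dots> = (\<Sum>j<Suc k. g j)"
    by (subst sum.lessThan_Suc_shift) (simp add: add.commute)
  finally show ?thesis
    using Suc by simp
qed simp

lemma sum_cyclic_by_parts:
  fixes x y :: "nat \<Rightarrow> 'a::real_inner"
  shows "(\<Sum>j<m. (x (Suc j mod m) - x j) \<bullet> y j)
       = (\<Sum>j<m. x (Suc j mod m) \<bullet> (y j - y (Suc j mod m)))"
  using sum_lessThan_Suc_mod[of "\<lambda>j. x j \<bullet> y j" m]
  by (simp add: inner_diff_left inner_diff_right sum_subtractf)

theorem proposition7p1:
  fixes K T :: "'a::euclidean_space set"
    and m :: nat
    and F G :: "nat \<Rightarrow> 'a set"
    and q q' p p' :: "nat \<Rightarrow> 'a"
  assumes "polytope K" and "polytope T"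
    and "0 \<in> interior K" and "0 \<in> interior T"
    and "\<forall>j<m. F j face_of K" and "\<forall>j<m. G j face_of T"
    and "\<forall>j<m. q j \<in> frontier K \<and> q' j \<in> frontier K"
    and "\<forall>j<m. p j \<in> frontier T \<and> p' j \<in> frontier T"
    and "\<forall>j<m. q (Suc j mod m) - q j \<in> normal_cone T (p j)"
    and "\<forall>j<m. p (Suc j mod m) - p j \<in> uminus ` normal_cone K (q (Suc j mod m))"
    and "\<forall>j<m. q' (Suc j mod m) - q' j \<in> normal_cone T (p' j)"
    and "\<forall>j<m. p' (Suc j mod m) - p' j \<in> uminus ` normal_cone K (q' (Suc j mod m))"
    and "\<forall>j<m. face_pos (F j) (q j) \<and> face_pos (F j) (q' j)"
    and "\<forall>j<m. face_pos (G j) (p j) \<and> face_pos (G j) (p' j)"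
  shows "poly_length T m q = poly_length T m q'"
proof -
  define s where "s j = Suc j mod m" for j
  have "closed T"
    using assms(2) by (rule polytope_imp_closed)
  then have in_T: "\<forall>j<m. p j \<in> T \<and> p' j \<in> T"
    using assms(8) frontier_subset_closed by blast
  have p'_normal: "p' j - p' (s j) \<in> normal_cone K (q' (s j))" if "j < m" for j
  proof -
    obtain w where "w \<in> normal_cone K (q' (s j))" "p' (s j) - p' j = - w"
      using assms(12) \<open>j < m\<close> unfolding s_def by blast
    then show ?thesis
      by (metis minus_diff_eq minus_minus)
  qed
  have "poly_length T m q = (\<Sum>j<m. (q (s j) - q j) \<bullet> p j)"
    using poly_length_eq_sum_inner[OF assms(9)] in_T unfolding s_def by simp
  also have "\<dots> = (\<Sum>j<m. (q (s j) - q j) \<bullet> p' j)"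
    using assms(6,9,14) unfolding s_def by (intro sum.cong) (auto intro: normal_cone_inner_eq_face_pos)
  also have "\<dots> = (\<Sum>j<m. q (s j) \<bullet> (p' j - p' (s j)))"
    unfolding s_def by (rule sum_cyclic_by_parts)
  also have "\<dots> = (\<Sum>j<m. q' (s j) \<bullet> (p' j - p' (s j)))"
  proof (rule sum.cong)
    fix j
    assume "j \<in> {..<m}"
    then have "s j < m"
      by (simp add: s_def)
    then have "(p' j - p' (s j)) \<bullet> q' (s j) = (p' j - p' (s j)) \<bullet> q (s j)"
      using normal_cone_inner_eq_face_pos[OF p'_normal] \<open>j \<in> {..<m}\<close> assms(5,13) by blast
    then show "q (s j) \<bullet> (p' j - p' (s j)) = q' (s j) \<bullet> (p' j - p' (s j))"
      by (simp add: inner_commute)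
  qed simp
  also have "\<dots> = (\<Sum>j<m. (q' (s j) - q' j) \<bullet> p' j)"
    unfolding s_def by (rule sum_cyclic_by_parts[symmetric])
  also have "\<dots> = poly_length T m q'"
    using poly_length_eq_sum_inner[OF assms(11)] in_T unfolding s_def by simp
  finally show ?thesis .
qed

end
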